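(* Let $\mathscr{X},\mathscr{Y},\mathscr{Z}$ be real Banach spaces with duals $\mathscr{X}^*,\mathscr{Y}^*,\mathscr{Z}^*$, let $A:\mathscr{X}\to\mathscr{Y}$, $B:\mathscr{X}\to\mathscr{Z}$ be bounded linear operators with adjoints $A^*,B^*$, let $\mathbf{y}_0\in\mathscr{Y}$ and $\rho>0$. Suppose $\hat{\mathbf{x}}\in\mathscr{X}$ satisfies $$\|\mathbf{y}_0-A\hat{\mathbf{x}}\|_{\mathscr{Y}}+\rho\|B\hat{\mathbf{x}}\|_{\mathscr{Z}}=\inf\{\|\mathbf{y}_0-A\mathbf{x}\|_{\mathscr{Y}}+\rho\|B\mathbf{x}\|_{\mathscr{Z}}:\mathbf{x}\in\mathscr{X}\}>0,$$ and $(\hat\lambda,\hat\mu)\in\mathscr{Y}^*\times\mathscr{Z}^*$ satisfies $\max\{\|\hat\lambda\|_{\mathscr{Y}^*},\|\hat\mu\|_{\mathscr{Z}^*}\}=1$, $A^*\hat\lambda+\rho B^*\hat\mu=0$ and $$\langle\mathbf{y}_0,\hat\lambda\rangle_{\mathscr{Y}}=\sup\{|\langle\mathbf{y}_0,\lambda\rangle_{\mathscr{Y}}|:\ \max\{\|\lambda\|_{\mathscr{Y}^*},\|\mu\|_{\mathscr{Z}^*}\}\le1,\ A^*\lambda+\rho B^*\mu=0\}>0.$$ Then: 1. If $\|\hat\lambda\|_{\mathscr{Y}^*}>\|\hat\mu\|_{\mathscr{Z}^*}$, then $B\hat{\mathbf{x}}=0$ and $\|\mathbf{y}_0-A\hat{\mathbf{x}}\|_{\mathscr{Y}}=\langle\mathbf{y}_0,\hat\lambda\rangle_{\mathscr{Y}}$.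 2. If $\|\hat\lambda\|_{\mathscr{Y}^*}<\|\hat\mu\|_{\mathscr{Z}^*}$, then $A\hat{\mathbf{x}}=\mathbf{y}_0$ and $\rho\|B\hat{\mathbf{x}}\|_{\mathscr{Z}}=\langle\mathbf{y}_0,\hat\lambda\rangle_{\mathscr{Y}}$. 3. If $\|\hat\lambda\|_{\mathscr{Y}^*}=\|\hat\mu\|_{\mathscr{Z}^*}$, then one of the following holds: (i) $B\hat{\mathbf{x}}=0$ and $\|\mathbf{y}_0-A\hat{\mathbf{x}}\|_{\mathscr{Y}}=\langle\mathbf{y}_0,\hat\lambda\rangle_{\mathscr{Y}}$; (ii) $A\hat{\mathbf{x}}=\mathbf{y}_0$ and $\rho\|B\hat{\mathbf{x}}\|_{\mathscr{Z}}=\langle\mathbf{y}_0,\hat\lambda\rangle_{\mathscr{Y}}$; (iii) $\mathbf{y}_0-A\hat{\mathbf{x}}\ne0$, $B\hat{\mathbf{x}}\ne0$, $(\mathbf{y}_0-A\hat{\mathbf{x}})/\|\mathbf{y}_0-A\hat{\mathbf{x}}\|_{\mathscr{Y}}$ is norming for $\hat\lambda$ and $-B\hat{\mathbf{x}}/\|B\hat{\mathbf{x}}\|_{\mathscr{Z}}$ is norming for $\hat\mu$.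
   Context: $\langle\mathbf{y},\lambda\rangle_{\mathscr{Y}}:=\lambda(\mathbf{y})$. For $\lambda\in\mathscr{Y}^*$, a vector $\mathbf{y}\in\mathscr{Y}$ is norming for $\lambda$ if $\|\mathbf{y}\|_{\mathscr{Y}}=1$ and $\langle\mathbf{y},\lambda\rangle_{\mathscr{Y}}=\|\lambda\|_{\mathscr{Y}^*}$; similarly for $\mathscr{Z}$. *)

theory Defs
  imports "HOL-Analysis.Analysis"
begin

definition norming_for :: "'a::real_normed_vector \<Rightarrow> ('a \<Rightarrow>\<^sub>L real) \<Rightarrow> bool" where
  "norming_for y l \<longleftrightarrow> norm y = 1 \<and> blinfun_apply l y = norm l"

definition adjoint_op :: "('a::real_normed_vector \<Rightarrow>\<^sub>L 'b::real_normed_vector) \<Rightarrow> ('b \<Rightarrow>\<^sub>L real) \<Rightarrow> ('a \<Rightarrow>\<^sub>L real)" where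
  "adjoint_op A l = l o\<^sub>L A"

end

theory Submission
  imports Defs
begin

(* Weak duality bounds |l y0| by the primal objective at every x, for every dual-feasible pair
   (l, m).  For strong duality, put on Y x Z the norm |y| + |z|, whose dual norm is
   max (norm l) (norm m): the functional t (y0, 0) + (A x, rho B x) |-> t delta, where delta is
   the primal infimum, is dominated by this norm, and its Hahn-Banach extension splits into a
   dual-feasible pair with l y0 = delta.  Hence lh y0 equals the primal value at xh, which forces
   equality in the weak-duality estimate: lh attains its norm on y0 - A xh and mh on - B xh.
   A functional of norm < 1 attains its norm only at 0, and this gives the three cases. *)

section \<open>Hahn-Banach extension dominated by a sublinear functional\<close>

definition sublinear :: "('a::real_vector \<Rightarrow> real) \<Rightarrow> bool" where
  "sublinear p \<longleftrightarrow> (\<forall>x y. p (x + y) \<le> p x + p y) \<and> (\<forall>c x. 0 \<le> c \<longrightarrow> p (c *\<^sub>R x) = c * p x)"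

lemma sublinear_add: "sublinear p \<Longrightarrow> p (x + y) \<le> p x + p y"
  unfolding sublinear_def by blast

lemma sublinear_scaleR: "sublinear p \<Longrightarrow> 0 \<le> c \<Longrightarrow> p (c *\<^sub>R x) = c * p x"
  unfolding sublinear_def by blast

lemma sublinear_zero: "sublinear p \<Longrightarrow> p 0 = 0"
  using sublinear_scaleR[of p 0 0] by simp

text \<open>Partial linear functionals are represented by their graphs: single-valued linear
  subspaces of \<^typ>\<open>'a \<times> real\<close>.\<close>

definition dominated_graph :: "('a::real_vector \<Rightarrow> real) \<Rightarrow> ('a \<times> real) set \<Rightarrow> bool" where
  "dominated_graph p G \<longleftrightarrow> subspace G \<and> (\<forall>x a b. (x, a) \<in> G \<longrightarrow> (x, b) \<in> G \<longrightarrow> a = b)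
     \<and> (\<forall>x a. (x, a) \<in> G \<longrightarrow> a \<le> p x)"

lemma dominated_graphD:
  assumes "dominated_graph p G"
  shows "subspace G" and "(x, a) \<in> G \<Longrightarrow> (x, b) \<in> G \<Longrightarrow> a = b"
    and "(x, a) \<in> G \<Longrightarrow> a \<le> p x"
  using assms unfolding dominated_graph_def by blast+

lemma dominated_graph_Union_chain:
  assumes chain: "subset.chain {G. dominated_graph p G} C" and "C \<noteq> {}"
  shows "dominated_graph p (\<Union>C)"
proof -
  have graphs: "\<And>G. G \<in> C \<Longrightarrow> dominated_graph p G"
    and common: "\<And>u v. u \<in> \<Union>C \<Longrightarrow> v \<in> \<Union>C \<Longrightarrow> \<exists>G\<in>C. u \<in> G \<and> v \<in> G"
    using chain unfolding subset_chain_def by blast+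
  have "subspace (\<Union>C)"
    unfolding subspace_def
  proof (intro conjI ballI allI)
    show "0 \<in> \<Union>C"
      using \<open>C \<noteq> {}\<close> graphs dominated_graphD(1) subspace_0 by blast
    show "u + v \<in> \<Union>C" if "u \<in> \<Union>C" "v \<in> \<Union>C" for u v
      using common[OF that] graphs dominated_graphD(1) subspace_add by blast
    show "c *\<^sub>R u \<in> \<Union>C" if "u \<in> \<Union>C" for c u
      using that graphs dominated_graphD(1) subspace_scale by blast
  qed
  moreover have "a = b" if "(x, a) \<in> \<Union>C" "(x, b) \<in> \<Union>C" for x a b
    using common[OF that] graphs dominated_graphD(2) by blast
  moreover have "a \<le> p x" if "(x, a) \<in> \<Union>C" for x a
    using that graphs dominated_graphD(3) by blast
  ultimately show ?thesis
    unfolding dominated_graph_def by blast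
qed

lemma maximal_dominated_graph:
  assumes "dominated_graph p G0"
  obtains M where "dominated_graph p M" and "G0 \<subseteq> M"
    and "\<And>X. dominated_graph p X \<Longrightarrow> M \<subseteq> X \<Longrightarrow> X = M"
proof -
  let ?A = "{G. dominated_graph p G \<and> G0 \<subseteq> G}"
  have "\<exists>M\<in>?A. \<forall>X\<in>?A. M \<subseteq> X \<longrightarrow> X = M"
  proof (rule subset_Zorn_nonempty)
    show "?A \<noteq> {}"
      using assms by blast
    show "\<Union>C \<in> ?A" if "C \<noteq> {}" and chain: "subset.chain ?A C" for C
    proof -
      have "subset.chain {G. dominated_graph p G} C"
        using chain unfolding subset_chain_def by blast
      then have "dominated_graph p (\<Union>C)"
        using \<open>C \<noteq> {}\<close> by (rule dominated_graph_Union_chain)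
      moreover have "G0 \<subseteq> \<Union>C"
        using \<open>C \<noteq> {}\<close> chain unfolding subset_chain_def by blast
      ultimately show ?thesis
        by blast
    qed
  qed
  then show ?thesis
    using that by (auto intro: order_trans)
qed

definition graph_extension :: "('a::real_vector \<times> real) set \<Rightarrow> 'a \<Rightarrow> real \<Rightarrow> ('a \<times> real) set" where
  "graph_extension M x0 c = (\<lambda>w. fst w + snd w *\<^sub>R (x0, c)) ` (M \<times> UNIV)"

lemma mem_graph_extension:
  "(z, a') \<in> graph_extension M x0 c \<longleftrightarrow> (\<exists>x a t. (x, a) \<in> M \<and> z = x + t *\<^sub>R x0 \<and> a' = a + t * c)"
  unfolding graph_extension_def by force

lemma subspace_graph_extension: "subspace M \<Longrightarrow> subspace (graph_extension M x0 c)"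
  unfolding graph_extension_def
  by (intro linear_subspace_image subspace_Times subspace_UNIV linearI)
    (auto simp: algebra_simps scaleR_add_left)

lemma graph_extension_single_valued:
  assumes M: "dominated_graph p M" and x0: "\<nexists>a. (x0, a) \<in> M"
    and za: "(z, a') \<in> graph_extension M x0 c" and zb: "(z, b') \<in> graph_extension M x0 c"
  shows "a' = b'"
proof -
  have M_sub: "subspace M"
    using dominated_graphD(1)[OF M] .
  obtain x a t y b s where xa: "(x, a) \<in> M" "z = x + t *\<^sub>R x0" "a' = a + t * c"
    and yb: "(y, b) \<in> M" "z = y + s *\<^sub>R x0" "b' = b + s * c"
    using za zb mem_graph_extension by meson
  have "t = s"
  proof (rule ccontr)
    assume "t \<noteq> s"
    have "(y - x, b - a) \<in> M"
      using subspace_diff[OF M_sub yb(1) xa(1)] by simp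
    then have "((1 / (t - s)) *\<^sub>R (y - x), (1 / (t - s)) * (b - a)) \<in> M"
      using subspace_scale[OF M_sub, of _ "1 / (t - s)"] by fastforce
    moreover have "y - x = (t - s) *\<^sub>R x0"
      using xa(2) yb(2) by (simp add: algebra_simps)
    then have "(1 / (t - s)) *\<^sub>R (y - x) = x0"
      using \<open>t \<noteq> s\<close> by simp
    ultimately show False
      using x0 by metis
  qed
  then have "a = b"
    using xa yb dominated_graphD(2)[OF M] by auto
  with \<open>t = s\<close> show ?thesis
    using xa yb by simp
qed

lemma graph_extension_dominated:
  assumes p: "sublinear p" and M: "dominated_graph p M"
    and c_lower: "\<And>x a. (x, a) \<in> M \<Longrightarrow> a - p (x - x0) \<le> c"
    and c_upper: "\<And>y b. (y, b) \<in> M \<Longrightarrow> c \<le> p (y + x0) - b"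
    and za: "(z, a') \<in> graph_extension M x0 c"
  shows "a' \<le> p z"
proof -
  have M_sub: "subspace M"
    using dominated_graphD(1)[OF M] .
  obtain x a t where xa: "(x, a) \<in> M" "z = x + t *\<^sub>R x0" "a' = a + t * c"
    using za mem_graph_extension by meson
  consider "t = 0" | "t > 0" | "t < 0"
    by linarith
  then show ?thesis
  proof cases
    case 1
    then show ?thesis
      using xa dominated_graphD(3)[OF M] by simp
  next
    case 2
    have "((1 / t) *\<^sub>R x, (1 / t) * a) \<in> M"
      using subspace_scale[OF M_sub xa(1)] by (simp only: scaleR_Pair real_scaleR_def)
    then have "c \<le> p ((1 / t) *\<^sub>R x + x0) - (1 / t) * a"
      by (rule c_upper)
    then have "t * c \<le> t * p ((1 / t) *\<^sub>R x + x0) - a"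
      using \<open>t > 0\<close> by (simp add: field_simps)
    also have "t * p ((1 / t) *\<^sub>R x + x0) = p (t *\<^sub>R ((1 / t) *\<^sub>R x + x0))"
      using \<open>t > 0\<close> by (intro sublinear_scaleR[OF p, symmetric]) simp
    also have "t *\<^sub>R ((1 / t) *\<^sub>R x + x0) = z"
      using xa(2) \<open>t > 0\<close> by (simp add: scaleR_add_right)
    finally show ?thesis
      using xa(3) by simp
  next
    case 3
    have "((- 1 / t) *\<^sub>R x, (- 1 / t) * a) \<in> M"
      using subspace_scale[OF M_sub xa(1)] by (simp only: scaleR_Pair real_scaleR_def)
    then have "(- 1 / t) * a - p ((- 1 / t) *\<^sub>R x - x0) \<le> c"
      by (rule c_lower)
    then have "a - (- t) * p ((- 1 / t) *\<^sub>R x - x0) \<le> - t * c"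
      using \<open>t < 0\<close> by (simp add: field_simps)
    also have "(- t) * p ((- 1 / t) *\<^sub>R x - x0) = p ((- t) *\<^sub>R ((- 1 / t) *\<^sub>R x - x0))"
      using \<open>t < 0\<close> by (intro sublinear_scaleR[OF p, symmetric]) simp
    also have "(- t) *\<^sub>R ((- 1 / t) *\<^sub>R x - x0) = z"
      using xa(2) \<open>t < 0\<close> by (simp add: scaleR_diff_right)
    finally show ?thesis
      using xa(3) by simp
  qed
qed

lemma dominated_graph_graph_extension:
  assumes p: "sublinear p" and M: "dominated_graph p M" and x0: "\<nexists>a. (x0, a) \<in> M"
    and c_lower: "\<And>x a. (x, a) \<in> M \<Longrightarrow> a - p (x - x0) \<le> c"
    and c_upper: "\<And>y b. (y, b) \<in> M \<Longrightarrow> c \<le> p (y + x0) - b"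
  shows "dominated_graph p (graph_extension M x0 c)"
  unfolding dominated_graph_def
  using subspace_graph_extension[OF dominated_graphD(1)[OF M]]
    graph_extension_single_valued[OF M x0] graph_extension_dominated[OF p M c_lower c_upper]
  by blast

lemma dominated_graph_extension_bound:
  assumes p: "sublinear p" and M: "dominated_graph p M"
  obtains c where "\<And>x a. (x, a) \<in> M \<Longrightarrow> a - p (x - x0) \<le> c"
    and "\<And>y b. (y, b) \<in> M \<Longrightarrow> c \<le> p (y + x0) - b"
proof -
  have M0: "(0, 0) \<in> M"
    using subspace_0[OF dominated_graphD(1)[OF M]] by (simp add: zero_prod_def)
  have sep: "a - p (x - x0) \<le> p (y + x0) - b" if "(x, a) \<in> M" "(y, b) \<in> M" for x a y b
  proof -
    have "(x + y, a + b) \<in> M"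
      using subspace_add[OF dominated_graphD(1)[OF M] that] by simp
    then have "a + b \<le> p (x + y)"
      by (rule dominated_graphD(3)[OF M])
    also have "\<dots> \<le> p (x - x0) + p (y + x0)"
      using sublinear_add[OF p, of "x - x0" "y + x0"] by simp
    finally show ?thesis by simp
  qed
  define L where "L = {a - p (x - x0) | x a. (x, a) \<in> M}"
  have "bdd_above L"
    unfolding L_def bdd_above_def using sep[OF _ M0] by blast
  moreover have "L \<noteq> {}"
    unfolding L_def using M0 by blast
  ultimately show ?thesis
    using sep by (intro that[of "Sup L"]) (auto simp: L_def intro!: cSup_upper cSup_least)
qed

lemma dominated_graph_extend:
  assumes p: "sublinear p" and M: "dominated_graph p M" and x0: "\<nexists>a. (x0, a) \<in> M"
  shows "\<exists>M'. dominated_graph p M' \<and> M \<subset> M'"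
proof -
  obtain c where "\<And>x a. (x, a) \<in> M \<Longrightarrow> a - p (x - x0) \<le> c"
    and "\<And>y b. (y, b) \<in> M \<Longrightarrow> c \<le> p (y + x0) - b"
    using dominated_graph_extension_bound[OF p M] by metis
  then have "dominated_graph p (graph_extension M x0 c)"
    using dominated_graph_graph_extension[OF p M x0] by blast
  moreover have "M \<subseteq> graph_extension M x0 c"
    unfolding graph_extension_def by (auto intro!: image_eqI[where x = "(_, 0)"])
  moreover have "(x0, c) \<in> graph_extension M x0 c"
    using mem_graph_extension subspace_0[OF dominated_graphD(1)[OF M]]
    unfolding graph_extension_def by (auto intro!: image_eqI[where x = "(0, 1)"])
  ultimately show ?thesis
    using x0 by blast
qed

lemma total_graph_linear:
  assumes M: "dominated_graph p M" and total: "\<And>x. \<exists>a. (x, a) \<in> M"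
  obtains F where "linear F" and "\<And>x a. (x, a) \<in> M \<longleftrightarrow> F x = a"
proof -
  define F where "F x = (THE a. (x, a) \<in> M)" for x
  have graph_F: "(x, a) \<in> M \<longleftrightarrow> F x = a" for x a
  proof -
    obtain b where b: "(x, b) \<in> M"
      using total by blast
    then have "F x = b"
      unfolding F_def using dominated_graphD(2)[OF M] by blast
    then show ?thesis
      using b dominated_graphD(2)[OF M] by auto
  qed
  have M_sub: "subspace M"
    using dominated_graphD(1)[OF M] .
  have "linear F"
  proof (rule linearI)
    show "F (x + y) = F x + F y" for x y
      using subspace_add[OF M_sub, of "(x, F x)" "(y, F y)"] graph_F by simp
    show "F (r *\<^sub>R x) = r *\<^sub>R F x" for r x
      using subspace_scale[OF M_sub, of "(x, F x)" r] graph_F by simp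
  qed
  with graph_F show ?thesis
    using that by blast
qed

theorem sublinear_Hahn_Banach:
  assumes p: "sublinear p" and G0: "dominated_graph p G0"
  obtains F where "linear F" and "\<And>x. F x \<le> p x" and "\<And>x a. (x, a) \<in> G0 \<Longrightarrow> F x = a"
proof -
  obtain M where M: "dominated_graph p M" "G0 \<subseteq> M"
    and maximal: "\<And>X. dominated_graph p X \<Longrightarrow> M \<subseteq> X \<Longrightarrow> X = M"
    using maximal_dominated_graph[OF G0] by blast
  have "\<exists>a. (x, a) \<in> M" for x
  proof (rule ccontr)
    assume "\<nexists>a. (x, a) \<in> M"
    then obtain M' where "dominated_graph p M'" "M \<subset> M'"
      using dominated_graph_extend[OF p M(1)] by blast
    then show False
      using maximal[of M'] by auto
  qed
  then obtain F where "linear F" and graph_F: "\<And>x a. (x, a) \<in> M \<longleftrightarrow> F x = a"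
    using total_graph_linear[OF M(1)] by blast
  then show ?thesis
    using that dominated_graphD(3)[OF M(1)] M(2) by blast
qed

lemma sublinear_distance_functional:
  assumes p: "sublinear p" and p_nonneg: "\<And>x. 0 \<le> p x"
    and V: "subspace V" and "0 < \<delta>" and dist: "\<And>v. v \<in> V \<Longrightarrow> \<delta> \<le> p (v0 - v)"
  obtains F where "linear F" and "\<And>x. F x \<le> p x" and "\<And>v. v \<in> V \<Longrightarrow> F v = 0"
    and "F v0 = \<delta>"
proof -
  have "dominated_graph p (V \<times> {0})"
    unfolding dominated_graph_def using V p_nonneg by (auto intro: subspace_Times subspace_single_0)
  moreover have "v0 \<notin> V"
    using dist[of v0] sublinear_zero[OF p] \<open>0 < \<delta>\<close> by auto
  moreover have "- p (v - v0) \<le> \<delta>" for v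
    using p_nonneg[of "v - v0"] \<open>0 < \<delta>\<close> by linarith
  moreover have "\<delta> \<le> p (v + v0)" if "v \<in> V" for v
    using dist[of "- v"] subspace_neg[OF V that] by (simp add: add.commute)
  ultimately have "dominated_graph p (graph_extension (V \<times> {0}) v0 \<delta>)"
    by (intro dominated_graph_graph_extension[OF p]) auto
  then obtain F where "linear F" "\<And>x. F x \<le> p x"
    and F_ext: "\<And>x a. (x, a) \<in> graph_extension (V \<times> {0}) v0 \<delta> \<Longrightarrow> F x = a"
    using sublinear_Hahn_Banach[OF p] by blast
  moreover have "F v = 0" if "v \<in> V" for v
    using F_ext[of v 0] that by (force simp: mem_graph_extension)
  moreover have "F v0 = \<delta>"
    using F_ext[of v0 \<delta>] subspace_0[OF V] by (force simp: mem_graph_extension)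
  ultimately show ?thesis
    using that by blast
qed

lemma linear_functional_blinfun:
  fixes g :: "'a::real_normed_vector \<Rightarrow> real"
  assumes g: "linear g" and "0 \<le> K" and bound: "\<And>x. g x \<le> K * norm x"
  obtains l where "blinfun_apply l = g" and "norm l \<le> K"
proof -
  have abs_bound: "norm (g x) \<le> K * norm x" for x
    using bound[of x] bound[of "- x"] linear_neg[OF g, of x] by simp
  then have "bounded_linear g"
    using g by (intro bounded_linear_intro[of g K]) (simp_all add: linear_add linear_scale mult.commute)
  then show ?thesis
    using that abs_bound \<open>0 \<le> K\<close> by (metis bounded_linear_Blinfun_apply norm_blinfun_bound)
qed

section \<open>Duality for norm-regularised approximation\<close>

lemma abs_blinfun_apply_le:
  fixes l :: "'a::real_normed_vector \<Rightarrow>\<^sub>L real"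
  assumes "norm l \<le> 1"
  shows "\<bar>l u\<bar> \<le> norm u"
  using norm_blinfun[of l u] mult_right_mono[OF assms norm_ge_zero[of u]] by simp

lemma adjoint_op_combination_eq_0_iff:
  "adjoint_op A l + c *\<^sub>R adjoint_op B m = 0 \<longleftrightarrow> (\<forall>x. l (A x) + c * m (B x) = 0)"
  by (simp add: adjoint_op_def blinfun_apply_inject[symmetric] fun_eq_iff plus_blinfun.rep_eq scaleR_blinfun.rep_eq)

lemma dual_feasible_split:
  assumes "adjoint_op A l + \<rho> *\<^sub>R adjoint_op B m = 0"
  shows "l y0 = l (y0 - A x) + \<rho> * m (- B x)"
  using assms unfolding adjoint_op_combination_eq_0_iff
  by (simp add: blinfun.diff_right blinfun.minus_right algebra_simps)

lemma weak_duality: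
  assumes "0 \<le> \<rho>" and "norm l \<le> 1" and "norm m \<le> 1"
    and "adjoint_op A l + \<rho> *\<^sub>R adjoint_op B m = 0"
  shows "\<bar>l y0\<bar> \<le> norm (y0 - A x) + \<rho> * norm (B x)"
proof -
  have "\<bar>\<rho> * m (- B x)\<bar> \<le> \<rho> * norm (B x)"
    using abs_blinfun_apply_le[OF assms(3), of "- B x"] assms(1) by (simp add: abs_mult mult_left_mono)
  then show ?thesis
    using dual_feasible_split[OF assms(4), of y0 x] abs_blinfun_apply_le[OF assms(2), of "y0 - A x"]
    by linarith
qed

lemma complementary_slackness:
  assumes "0 < \<rho>" and "norm l \<le> 1" and "norm m \<le> 1"
    and "adjoint_op A l + \<rho> *\<^sub>R adjoint_op B m = 0"
    and "l y0 = norm (y0 - A x) + \<rho> * norm (B x)"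
  shows "l (y0 - A x) = norm (y0 - A x)" and "m (- B x) = norm (- B x)"
proof -
  have "l (y0 - A x) \<le> norm (y0 - A x)"
    using abs_blinfun_apply_le[OF assms(2)] by (simp add: abs_le_iff)
  moreover have "\<rho> * m (- B x) \<le> \<rho> * norm (B x)"
    using abs_blinfun_apply_le[OF assms(3), of "- B x"] assms(1) by (simp add: abs_le_iff)
  ultimately have "l (y0 - A x) = norm (y0 - A x)" and "\<rho> * m (- B x) = \<rho> * norm (B x)"
    using dual_feasible_split[OF assms(4), of y0 x] assms(5) by linarith+
  then show "l (y0 - A x) = norm (y0 - A x)" and "m (- B x) = norm (- B x)"
    using assms(1) by simp_all
qed

lemma sublinear_sum_norm: "sublinear (\<lambda>v. norm (fst v) + norm (snd v))"
  unfolding sublinear_def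
proof (intro conjI allI impI)
  show "norm (fst (v + w)) + norm (snd (v + w))
      \<le> norm (fst v) + norm (snd v) + (norm (fst w) + norm (snd w))" for v w :: "'a \<times> 'b"
    using norm_triangle_ineq[of "fst v" "fst w"] norm_triangle_ineq[of "snd v" "snd w"] by simp
qed (simp add: algebra_simps)

lemma linear_Pair_zero_right: "linear (\<lambda>y. (y, 0))"
  by (rule linearI) simp_all

lemma linear_Pair_zero_left: "linear (\<lambda>z. (0, z))"
  by (rule linearI) simp_all

lemma linear_le_sum_norm_split:
  fixes F :: "'y::real_normed_vector \<times> 'z::real_normed_vector \<Rightarrow> real"
  assumes F: "linear F" and F_le: "\<And>v. F v \<le> norm (fst v) + norm (snd v)"
  obtains l :: "'y \<Rightarrow>\<^sub>L real" and m :: "'z \<Rightarrow>\<^sub>L real"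
  where "norm l \<le> 1" and "norm m \<le> 1" and "\<And>y z. F (y, z) = l y + m z"
proof -
  have "linear (\<lambda>y. F (y, 0))"
    using linear_compose[OF linear_Pair_zero_right F] by (simp add: o_def)
  moreover have "F (y, 0) \<le> 1 * norm y" for y
    using F_le[of "(y, 0)"] by simp
  ultimately obtain l where l: "blinfun_apply l = (\<lambda>y. F (y, 0))" "norm l \<le> 1"
    by (rule linear_functional_blinfun[OF _ zero_le_one])
  have "linear (\<lambda>z. F (0, z))"
    using linear_compose[OF linear_Pair_zero_left F] by (simp add: o_def)
  moreover have "F (0, z) \<le> 1 * norm z" for z
    using F_le[of "(0, z)"] by simp
  ultimately obtain m where m: "blinfun_apply m = (\<lambda>z. F (0, z))" "norm m \<le> 1"
    by (rule linear_functional_blinfun[OF _ zero_le_one])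
  have "F (y, z) = l y + m z" for y z
    using linear_add[OF F, of "(y, 0)" "(0, z)"] l(1) m(1) by simp
  with l(2) m(2) show ?thesis
    using that by blast
qed

lemma dual_pair_attaining_primal_bound:
  fixes A :: "'x::real_normed_vector \<Rightarrow>\<^sub>L 'y::real_normed_vector"
    and B :: "'x \<Rightarrow>\<^sub>L 'z::real_normed_vector"
  assumes "0 \<le> \<rho>" and "0 < \<delta>" and primal_bound: "\<And>x. \<delta> \<le> norm (y0 - A x) + \<rho> * norm (B x)"
  obtains l :: "'y \<Rightarrow>\<^sub>L real" and m :: "'z \<Rightarrow>\<^sub>L real"
  where "norm l \<le> 1" and "norm m \<le> 1" and "adjoint_op A l + \<rho> *\<^sub>R adjoint_op B m = 0"
    and "l y0 = \<delta>"
proof -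
  define p :: "'y \<times> 'z \<Rightarrow> real" where "p = (\<lambda>v. norm (fst v) + norm (snd v))"
  define V where "V = range (\<lambda>x. (A x, \<rho> *\<^sub>R B x))"
  have "subspace V"
    unfolding V_def
    by (intro linear_subspace_image subspace_UNIV linearI)
      (simp_all add: blinfun.add_right blinfun.scaleR_right algebra_simps)
  moreover have "\<delta> \<le> p ((y0, 0) - v)" if "v \<in> V" for v
    using that primal_bound \<open>0 \<le> \<rho>\<close> by (auto simp: V_def p_def)
  moreover have "sublinear p" and "0 \<le> p v" for v
    unfolding p_def using sublinear_sum_norm by simp_all
  ultimately obtain F where F: "linear F" "\<And>v. F v \<le> p v"
    and F_V: "\<And>v. v \<in> V \<Longrightarrow> F v = 0" and F_y0: "F (y0, 0) = \<delta>"
    using sublinear_distance_functional \<open>0 < \<delta>\<close> by blast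
  then obtain l :: "'y \<Rightarrow>\<^sub>L real" and m :: "'z \<Rightarrow>\<^sub>L real"
    where lm: "norm l \<le> 1" "norm m \<le> 1" and F_lm: "\<And>y z. F (y, z) = l y + m z"
    using linear_le_sum_norm_split unfolding p_def by blast
  have "(A x, \<rho> *\<^sub>R B x) \<in> V" for x
    unfolding V_def by (rule rangeI)
  then have "l (A x) + \<rho> * m (B x) = 0" for x
    using F_V F_lm[of "A x" "\<rho> *\<^sub>R B x"] by (simp add: blinfun.scaleR_right)
  then show ?thesis
    using that lm F_y0 F_lm unfolding adjoint_op_combination_eq_0_iff by simp
qed

theorem strong_duality:
  fixes A :: "'x::real_normed_vector \<Rightarrow>\<^sub>L 'y::real_normed_vector"
    and B :: "'x \<Rightarrow>\<^sub>L 'z::real_normed_vector"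
  assumes "0 \<le> \<rho>" and primal_pos: "0 < Inf {norm (y0 - A x) + \<rho> * norm (B x) | x. True}"
  shows "Sup {\<bar>blinfun_apply l y0\<bar> | (l :: 'y \<Rightarrow>\<^sub>L real) (m :: 'z \<Rightarrow>\<^sub>L real).
               max (norm l) (norm m) \<le> 1 \<and> adjoint_op A l + \<rho> *\<^sub>R adjoint_op B m = 0}
       = Inf {norm (y0 - A x) + \<rho> * norm (B x) | x. True}"
    (is "Sup ?D = Inf ?P")
proof -
  have "bdd_below ?P"
    using \<open>0 \<le> \<rho>\<close> by (auto intro!: bdd_belowI[of _ 0])
  then have primal_bound: "Inf ?P \<le> norm (y0 - A x) + \<rho> * norm (B x)" for x
    by (intro cInf_lower) blast+
  obtain l :: "'y \<Rightarrow>\<^sub>L real" and m :: "'z \<Rightarrow>\<^sub>L real"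
    where "norm l \<le> 1" "norm m \<le> 1" "adjoint_op A l + \<rho> *\<^sub>R adjoint_op B m = 0"
      and "l y0 = Inf ?P"
    using dual_pair_attaining_primal_bound[OF \<open>0 \<le> \<rho>\<close> primal_pos primal_bound] by blast
  then have "Inf ?P \<in> ?D"
    using primal_pos by force
  moreover have "d \<le> Inf ?P" if "d \<in> ?D" for d
    using that weak_duality[OF \<open>0 \<le> \<rho>\<close>] by (force intro!: cInf_greatest)
  ultimately show ?thesis
    by (intro antisym cSup_least cSup_upper bdd_aboveI[of _ "Inf ?P"]) auto
qed

lemma one_le_norm_blinfun:
  fixes l :: "'a::real_normed_vector \<Rightarrow>\<^sub>L real"
  assumes "l u = norm u" and "u \<noteq> 0"
  shows "1 \<le> norm l"
  using norm_blinfun[of l u] assms by simp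

lemma norming_for_normalized:
  fixes l :: "'a::real_normed_vector \<Rightarrow>\<^sub>L real"
  assumes "l u = norm u" and "norm l = 1" and "u \<noteq> 0"
  shows "norming_for (u /\<^sub>R norm u) l"
  using assms unfolding norming_for_def by (simp add: blinfun.scaleR_right)

lemma norm_attaining_pair_cases:
  fixes l :: "'a::real_normed_vector \<Rightarrow>\<^sub>L real" and m :: "'b::real_normed_vector \<Rightarrow>\<^sub>L real"
  assumes "max (norm l) (norm m) = 1" and l_u: "l u = norm u" and m_w: "m w = norm w"
  shows "(norm l > norm m \<longrightarrow> w = 0) \<and> (norm l < norm m \<longrightarrow> u = 0)
    \<and> (norm l = norm m \<longrightarrow> u = 0 \<or> w = 0
         \<or> (norming_for (u /\<^sub>R norm u) l \<and> norming_for (w /\<^sub>R norm w) m))"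
proof (intro conjI impI)
  show "w = 0" if "norm l > norm m"
    using that assms(1) one_le_norm_blinfun[OF m_w] by (cases "w = 0") auto
  show "u = 0" if "norm l < norm m"
    using that assms(1) one_le_norm_blinfun[OF l_u] by (cases "u = 0") auto
  show "u = 0 \<or> w = 0 \<or> (norming_for (u /\<^sub>R norm u) l \<and> norming_for (w /\<^sub>R norm w) m)"
    if "norm l = norm m"
    using that assms(1) norming_for_normalized[OF l_u] norming_for_normalized[OF m_w] by auto
qed

theorem proposition3p6:
  fixes A :: "'x::banach \<Rightarrow>\<^sub>L 'y::banach"
    and B :: "'x \<Rightarrow>\<^sub>L 'z::banach"
    and y0 :: 'y and \<rho> :: real
    and xh :: 'x and lh :: "'y \<Rightarrow>\<^sub>L real" and mh :: "'z \<Rightarrow>\<^sub>L real"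
  assumes rho: "\<rho> > 0"
    and xmin: "norm (y0 - A xh) + \<rho> * norm (B xh)
               = Inf {norm (y0 - A x) + \<rho> * norm (B x) | x. True}"
    and infpos: "Inf {norm (y0 - A x) + \<rho> * norm (B x) | x. True} > 0"
    and dnorm: "max (norm lh) (norm mh) = 1"
    and dfeas: "adjoint_op A lh + \<rho> *\<^sub>R adjoint_op B mh = 0"
    and dopt: "lh y0 = Sup {\<bar>blinfun_apply l y0\<bar> | (l :: 'y \<Rightarrow>\<^sub>L real) (m :: 'z \<Rightarrow>\<^sub>L real). max (norm l) (norm m) \<le> 1
                    \<and> adjoint_op A l + \<rho> *\<^sub>R adjoint_op B m = 0}"
    and suppos: "Sup {\<bar>blinfun_apply l y0\<bar> | (l :: 'y \<Rightarrow>\<^sub>L real) (m :: 'z \<Rightarrow>\<^sub>L real). max (norm l) (norm m) \<le> 1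
                    \<and> adjoint_op A l + \<rho> *\<^sub>R adjoint_op B m = 0} > 0"
  shows "(norm lh > norm mh \<longrightarrow> B xh = 0 \<and> norm (y0 - A xh) = lh y0)
       \<and> (norm lh < norm mh \<longrightarrow> A xh = y0 \<and> \<rho> * norm (B xh) = lh y0)
       \<and> (norm lh = norm mh \<longrightarrow>
            (B xh = 0 \<and> norm (y0 - A xh) = lh y0)
          \<or> (A xh = y0 \<and> \<rho> * norm (B xh) = lh y0)
          \<or> (y0 - A xh \<noteq> 0 \<and> B xh \<noteq> 0
             \<and> norming_for ((y0 - A xh) /\<^sub>R norm (y0 - A xh)) lh
             \<and> norming_for (- (B xh /\<^sub>R norm (B xh))) mh))"
proof -
  have optimal_value: "lh y0 = norm (y0 - A xh) + \<rho> * norm (B xh)"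
    using dopt strong_duality[OF less_imp_le[OF rho] infpos] xmin by simp
  have "norm lh \<le> 1" and "norm mh \<le> 1"
    using dnorm by auto
  then have "lh (y0 - A xh) = norm (y0 - A xh)" and "mh (- B xh) = norm (- B xh)"
    using complementary_slackness[OF rho _ _ dfeas optimal_value] by blast+
  from norm_attaining_pair_cases[OF dnorm this] show ?thesis
    using optimal_value by auto
qed

end
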